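(* Let $I\subset[0,+\infty)$ be an open interval, $\beta\in\{-1,1\}$, $t_0\in I$, $T>0$ with $t_0+\beta T\in I$, $\kappa,\mu\in\,]-1,+\infty[$, $\xi\in[0,1]$. Let the noise $\varpi$ be either a Wiener process with parameter $\sigma^2$ (set $\eta=\sigma^2$) or a Poisson process with intensity $\nu$ (set $\eta=\nu$). Then for the Jacobi estimators of the first order derivative, $$\mathrm{Var}\big[e^{\mu,\kappa}_{\varpi,\beta T}(t_0)\big]=\frac{2\eta}{T}\,\frac{\mu+1}{2\mu+2\kappa+5}\,\frac{B(2\mu+2,2\kappa+3)}{B^2(\kappa+2,\mu+2)},$$ and $$\mathrm{Var}\big[e^{\mu,\kappa}_{\varpi,\beta T,2,\xi}(t_0)\big]=\lambda_1^2\frac{2\eta}{T}\frac{\mu+2}{2\mu+2\kappa+7}\frac{B(2\mu+4,2\kappa+3)}{B^2(\kappa+2,\mu+3)}+\lambda_0^2\frac{2\eta}{T}\frac{\mu+1}{2\mu+2\kappa+7}\frac{B(2\mu+2,2\kappa+5)}{B^2(\kappa+3,\mu+2)}+\lambda_0\lambda_1\frac{2\eta}{T}\frac{B(2\mu+4,2\kappa+4)}{B(\kappa+2,\mu+3)B(\kappa+3,\mu+2)},$$ where $\lambda_1=(\kappa+3)-(\mu+\kappa+5)\xi$ and $\lambda_0=1-\lambda_1$.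
   Context: $B$ is the Beta function. A Wiener process with parameter $\sigma^2$ has mean $0$ and covariance $\sigma^2\min(t,s)$; a Poisson process with intensity $\nu$ has mean $\nu t$ and covariance $\nu\min(t,s)$. For $a,b>-1$ the minimal first-order Jacobi estimator kernel is $p^{a,b}_{\beta T}(\tau)=\frac{1}{\beta T}\frac{\Gamma(a+b+4)}{\Gamma(b+2)\Gamma(a+2)}\big((a+b+2)\tau-(b+1)\big)(1-\tau)^{a}\tau^{b}$, and $e^{\mu,\kappa}_{\varpi,\beta T}(t_0)=\int_0^1p^{\mu,\kappa}_{\beta T}(\tau)\varpi(t_0+\beta T\tau)d\tau$ (mean-square integral). The affine first-order Jacobi estimator with $N=2$ has kernel $p^{\mu,\kappa}_{\beta T,2,\xi}=\lambda_1 p^{\mu+1,\kappa}_{\beta T}+\lambda_0p^{\mu,\kappa+1}_{\beta T}$ and noise error contribution $e^{\mu,\kappa}_{\varpi,\beta T,2,\xi}(t_0)=\int_0^1p^{\mu,\kappa}_{\beta T,2,\xi}(\tau)\varpi(t_0+\beta T\tau)d\tau$. *)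

theory Defs
  imports "HOL-Probability.Probability"
begin

definition jacobi_kernel :: "real \<Rightarrow> real \<Rightarrow> real \<Rightarrow> real \<Rightarrow> real" where
  "jacobi_kernel a b h \<tau> =
     (1 / h) * (Gamma (a + b + 4) / (Gamma (b + 2) * Gamma (a + 2)))
     * ((a + b + 2) * \<tau> - (b + 1)) * (1 - \<tau>) powr a * \<tau> powr b"

definition jacobi_lambda1 :: "real \<Rightarrow> real \<Rightarrow> real \<Rightarrow> real" where
  "jacobi_lambda1 \<mu> \<kappa> \<xi> = (\<kappa> + 3) - (\<mu> + \<kappa> + 5) * \<xi>"

definition jacobi_lambda0 :: "real \<Rightarrow> real \<Rightarrow> real \<Rightarrow> real" where
  "jacobi_lambda0 \<mu> \<kappa> \<xi> = 1 - jacobi_lambda1 \<mu> \<kappa> \<xi>"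

definition jacobi_kernel_affine2 :: "real \<Rightarrow> real \<Rightarrow> real \<Rightarrow> real \<Rightarrow> real \<Rightarrow> real" where
  "jacobi_kernel_affine2 \<mu> \<kappa> \<xi> h \<tau> =
     jacobi_lambda1 \<mu> \<kappa> \<xi> * jacobi_kernel (\<mu> + 1) \<kappa> h \<tau>
   + jacobi_lambda0 \<mu> \<kappa> \<xi> * jacobi_kernel \<mu> (\<kappa> + 1) h \<tau>"

definition rv_variance :: "'a measure \<Rightarrow> ('a \<Rightarrow> real) \<Rightarrow> real" where
  "rv_variance M Y = integral\<^sup>L M (\<lambda>\<omega>. (Y \<omega> - integral\<^sup>L M Y)\<^sup>2)"

definition second_order_process ::
  "'a measure \<Rightarrow> (real \<Rightarrow> 'a \<Rightarrow> real) \<Rightarrow> (real \<Rightarrow> real) \<Rightarrow> (real \<Rightarrow> real \<Rightarrow> real) \<Rightarrow> bool" where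
  "second_order_process M X m c \<longleftrightarrow>
     (\<forall>t\<ge>0. X t \<in> borel_measurable M \<and> integrable M (\<lambda>\<omega>. (X t \<omega>)\<^sup>2)
              \<and> integral\<^sup>L M (X t) = m t) \<and>
     (\<forall>t s. t \<ge> 0 \<longrightarrow> s \<ge> 0 \<longrightarrow>
        integral\<^sup>L M (\<lambda>\<omega>. (X t \<omega> - m t) * (X s \<omega> - m s)) = c t s)"

definition wiener_process_param :: "'a measure \<Rightarrow> (real \<Rightarrow> 'a \<Rightarrow> real) \<Rightarrow> real \<Rightarrow> bool" where
  "wiener_process_param M X \<sigma>2 \<longleftrightarrow>
     \<sigma>2 > 0 \<and> second_order_process M X (\<lambda>_. 0) (\<lambda>t s. \<sigma>2 * min t s)"

definition poisson_process_intensity :: "'a measure \<Rightarrow> (real \<Rightarrow> 'a \<Rightarrow> real) \<Rightarrow> real \<Rightarrow> bool" where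
  "poisson_process_intensity M X \<nu> \<longleftrightarrow>
     \<nu> > 0 \<and> second_order_process M X (\<lambda>t. \<nu> * t) (\<lambda>t s. \<nu> * min t s)"

text \<open>Y is the mean-square integral over [0,1] of tau |-> f tau * Z tau, characterised
  weakly (as an element of L2(M)): for every square-integrable W,
  E[Y W] = int_0^1 f(tau) E[Z(tau) W] dtau.\<close>
definition ms_integral01 ::
  "'a measure \<Rightarrow> (real \<Rightarrow> real) \<Rightarrow> (real \<Rightarrow> 'a \<Rightarrow> real) \<Rightarrow> ('a \<Rightarrow> real) \<Rightarrow> bool" where
  "ms_integral01 M f Z Y \<longleftrightarrow>
     Y \<in> borel_measurable M \<and> integrable M (\<lambda>\<omega>. (Y \<omega>)\<^sup>2) \<and>
     (\<forall>W. W \<in> borel_measurable M \<longrightarrow> integrable M (\<lambda>\<omega>. (W \<omega>)\<^sup>2) \<longrightarrow>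
        set_integrable lborel {0..1} (\<lambda>\<tau>. f \<tau> * integral\<^sup>L M (\<lambda>\<omega>. Z \<tau> \<omega> * W \<omega>)) \<and>
        integral\<^sup>L M (\<lambda>\<omega>. Y \<omega> * W \<omega>) =
          (LINT \<tau>:{0..1}|lborel. f \<tau> * integral\<^sup>L M (\<lambda>\<omega>. Z \<tau> \<omega> * W \<omega>)))"

end

theory Submission
  imports Defs
begin

(*
  Wiener and Poisson noise share the covariance \<eta> min t s, so the weak characterisation of the
  mean-square integral gives Var e = \<eta> \<integral>\<integral> f \<tau> f s min (t0 + \<beta>T s) (t0 + \<beta>T \<tau>) ds d\<tau> for the
  estimator kernel f. Each kernel is f = - g' / (\<beta>T) with g vanishing at 0 and 1; for the
  minimal kernel g x = (1 - x)^(\<mu>+1) x^(\<kappa>+1) / B(\<kappa>+2, \<mu>+2). Integrating by parts against the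
  piecewise linear covariance collapses the double integral to (\<eta>/T) \<integral>\<^sub>0\<^sup>1 g\<^sup>2, and products of
  such g are Beta integrands.
*)

lemma integrable_mult_square_integrable:
  fixes U V :: "'a \<Rightarrow> real"
  assumes "U \<in> borel_measurable M" "V \<in> borel_measurable M"
    and "integrable M (\<lambda>\<omega>. (U \<omega>)\<^sup>2)" "integrable M (\<lambda>\<omega>. (V \<omega>)\<^sup>2)"
  shows "integrable M (\<lambda>\<omega>. U \<omega> * V \<omega>)"
proof (rule Bochner_Integration.integrable_bound)
  show "integrable M (\<lambda>\<omega>. (U \<omega>)\<^sup>2 + (V \<omega>)\<^sup>2)"
    using assms by simp
  have "\<bar>u * v\<bar> \<le> u\<^sup>2 + v\<^sup>2" for u v :: real
  proof -
    have "\<bar>u * v\<bar> \<le> 2 * \<bar>u\<bar> * \<bar>v\<bar>"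
      by (simp add: abs_mult)
    also have "\<dots> \<le> \<bar>u\<bar>\<^sup>2 + \<bar>v\<bar>\<^sup>2"
      by (rule sum_squares_bound)
    finally show ?thesis
      by simp
  qed
  then show "AE \<omega> in M. norm (U \<omega> * V \<omega>) \<le> norm ((U \<omega>)\<^sup>2 + (V \<omega>)\<^sup>2)"
    by simp
qed (use assms in simp)

lemma (in finite_measure) square_integrable_diff_const:
  fixes U :: "'a \<Rightarrow> real"
  assumes "U \<in> borel_measurable M" "integrable M (\<lambda>\<omega>. (U \<omega>)\<^sup>2)"
  shows "integrable M (\<lambda>\<omega>. (U \<omega> - c)\<^sup>2)"
proof -
  have "integrable M U"
    using assms by (rule square_integrable_imp_integrable)
  then show ?thesis
    using assms by (simp add: power2_diff)
qed

lemma (in prob_space) ms_integral01_expectation: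
  assumes Y: "ms_integral01 M f Z Y"
    and mean: "\<And>\<tau>. \<tau> \<in> {0..1} \<Longrightarrow> expectation (Z \<tau>) = m \<tau>"
  shows "set_integrable lborel {0..1} (\<lambda>\<tau>. f \<tau> * m \<tau>)"
    and "expectation Y = (LINT \<tau>:{0..1}|lborel. f \<tau> * m \<tau>)"
proof -
  have fZ: "set_integrable lborel {0..1} (\<lambda>\<tau>. f \<tau> * expectation (Z \<tau>))"
    and Y1: "expectation Y = (LINT \<tau>:{0..1}|lborel. f \<tau> * expectation (Z \<tau>))"
    using Y[unfolded ms_integral01_def, THEN conjunct2, THEN conjunct2, rule_format, of "\<lambda>_. 1"]
    by simp_all
  have eq: "f \<tau> * expectation (Z \<tau>) = f \<tau> * m \<tau>" if "\<tau> \<in> {0..1}" for \<tau>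
    using mean[OF that] by simp
  have "set_integrable lborel {0..1} (\<lambda>\<tau>. f \<tau> * expectation (Z \<tau>)) =
      set_integrable lborel {0..1} (\<lambda>\<tau>. f \<tau> * m \<tau>)"
    by (rule set_integrable_cong) (use eq in auto)
  with fZ show "set_integrable lborel {0..1} (\<lambda>\<tau>. f \<tau> * m \<tau>)"
    by simp
  have "(LINT \<tau>:{0..1}|lborel. f \<tau> * expectation (Z \<tau>)) = (LINT \<tau>:{0..1}|lborel. f \<tau> * m \<tau>)"
    by (rule set_lebesgue_integral_cong) (use eq in auto)
  with Y1 show "expectation Y = (LINT \<tau>:{0..1}|lborel. f \<tau> * m \<tau>)"
    by simp
qed

lemma (in prob_space) ms_integral01_centered:
  assumes Y: "ms_integral01 M f Z Y"
    and meas: "\<And>\<tau>. \<tau> \<in> {0..1} \<Longrightarrow> Z \<tau> \<in> borel_measurable M"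
    and sq: "\<And>\<tau>. \<tau> \<in> {0..1} \<Longrightarrow> integrable M (\<lambda>\<omega>. (Z \<tau> \<omega>)\<^sup>2)"
    and mean: "\<And>\<tau>. \<tau> \<in> {0..1} \<Longrightarrow> expectation (Z \<tau>) = m \<tau>"
  shows "ms_integral01 M f (\<lambda>\<tau> \<omega>. Z \<tau> \<omega> - m \<tau>) (\<lambda>\<omega>. Y \<omega> - expectation Y)"
  unfolding ms_integral01_def
proof (intro conjI allI impI)
  have Y_meas: "Y \<in> borel_measurable M" and Y_sq: "integrable M (\<lambda>\<omega>. (Y \<omega>)\<^sup>2)"
    using Y unfolding ms_integral01_def by auto
  then show "(\<lambda>\<omega>. Y \<omega> - expectation Y) \<in> borel_measurable M"
    and "integrable M (\<lambda>\<omega>. (Y \<omega> - expectation Y)\<^sup>2)"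
    by (auto intro: square_integrable_diff_const)
  fix W :: "'a \<Rightarrow> real"
  assume W_meas: "W \<in> borel_measurable M" and W_sq: "integrable M (\<lambda>\<omega>. (W \<omega>)\<^sup>2)"
  have fZ: "set_integrable lborel {0..1} (\<lambda>\<tau>. f \<tau> * expectation (\<lambda>\<omega>. Z \<tau> \<omega> * W \<omega>))"
    and YW: "expectation (\<lambda>\<omega>. Y \<omega> * W \<omega>) =
               (LINT \<tau>:{0..1}|lborel. f \<tau> * expectation (\<lambda>\<omega>. Z \<tau> \<omega> * W \<omega>))"
    using Y W_meas W_sq unfolding ms_integral01_def by auto
  have fm: "set_integrable lborel {0..1} (\<lambda>\<tau>. expectation W * (f \<tau> * m \<tau>))"
    using ms_integral01_expectation(1)[OF Y mean] by simp
  have fZW: "set_integrable lborel {0..1}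
      (\<lambda>\<tau>. f \<tau> * expectation (\<lambda>\<omega>. Z \<tau> \<omega> * W \<omega>) - expectation W * (f \<tau> * m \<tau>))"
    using fZ fm by (rule set_integral_diff)
  have W_int: "integrable M W"
    using W_meas W_sq by (rule square_integrable_imp_integrable)
  have centered: "expectation (\<lambda>\<omega>. (Z \<tau> \<omega> - m \<tau>) * W \<omega>) =
      expectation (\<lambda>\<omega>. Z \<tau> \<omega> * W \<omega>) - m \<tau> * expectation W" if "\<tau> \<in> {0..1}" for \<tau>
    using integrable_mult_square_integrable[OF meas[OF that] W_meas sq[OF that] W_sq] W_int
    by (simp add: left_diff_distrib)
  have eq: "f \<tau> * expectation (\<lambda>\<omega>. (Z \<tau> \<omega> - m \<tau>) * W \<omega>) =
      f \<tau> * expectation (\<lambda>\<omega>. Z \<tau> \<omega> * W \<omega>) - expectation W * (f \<tau> * m \<tau>)"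
    if "\<tau> \<in> {0..1}" for \<tau>
    unfolding centered[OF that] by (simp add: algebra_simps)
  show "set_integrable lborel {0..1}
      (\<lambda>\<tau>. f \<tau> * expectation (\<lambda>\<omega>. (Z \<tau> \<omega> - m \<tau>) * W \<omega>))"
    using fZW by (subst set_integrable_cong[OF refl refl eq]) auto
  have "expectation (\<lambda>\<omega>. (Y \<omega> - expectation Y) * W \<omega>) =
      expectation (\<lambda>\<omega>. Y \<omega> * W \<omega>) - expectation Y * expectation W"
    unfolding left_diff_distrib
    using integrable_mult_square_integrable[OF Y_meas W_meas Y_sq W_sq] W_int by simp
  also have "\<dots> = (LINT \<tau>:{0..1}|lborel.
      f \<tau> * expectation (\<lambda>\<omega>. Z \<tau> \<omega> * W \<omega>) - expectation W * (f \<tau> * m \<tau>))"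
    using fZ fm YW ms_integral01_expectation(2)[OF Y mean] by (simp add: mult.commute)
  also have "\<dots> = (LINT \<tau>:{0..1}|lborel. f \<tau> * expectation (\<lambda>\<omega>. (Z \<tau> \<omega> - m \<tau>) * W \<omega>))"
    using eq by (auto intro: set_lebesgue_integral_cong)
  finally show "expectation (\<lambda>\<omega>. (Y \<omega> - expectation Y) * W \<omega>) =
      (LINT \<tau>:{0..1}|lborel. f \<tau> * expectation (\<lambda>\<omega>. (Z \<tau> \<omega> - m \<tau>) * W \<omega>))" .
qed

lemma ms_integral01_second_moment:
  assumes Y: "ms_integral01 M f Z Y"
    and meas: "\<And>\<tau>. \<tau> \<in> {0..1} \<Longrightarrow> Z \<tau> \<in> borel_measurable M"
    and sq: "\<And>\<tau>. \<tau> \<in> {0..1} \<Longrightarrow> integrable M (\<lambda>\<omega>. (Z \<tau> \<omega>)\<^sup>2)"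
  shows "\<And>\<tau>. \<tau> \<in> {0..1} \<Longrightarrow>
      set_integrable lborel {0..1} (\<lambda>s. f s * integral\<^sup>L M (\<lambda>\<omega>. Z s \<omega> * Z \<tau> \<omega>))"
    and "set_integrable lborel {0..1}
      (\<lambda>\<tau>. f \<tau> * (LINT s:{0..1}|lborel. f s * integral\<^sup>L M (\<lambda>\<omega>. Z s \<omega> * Z \<tau> \<omega>)))"
    and "integral\<^sup>L M (\<lambda>\<omega>. (Y \<omega>)\<^sup>2) =
      (LINT \<tau>:{0..1}|lborel. f \<tau> * (LINT s:{0..1}|lborel. f s * integral\<^sup>L M (\<lambda>\<omega>. Z s \<omega> * Z \<tau> \<omega>)))"
proof -
  have Y_meas: "Y \<in> borel_measurable M" and Y_sq: "integrable M (\<lambda>\<omega>. (Y \<omega>)\<^sup>2)"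
    and YW: "\<And>W. W \<in> borel_measurable M \<Longrightarrow> integrable M (\<lambda>\<omega>. (W \<omega>)\<^sup>2) \<Longrightarrow>
      set_integrable lborel {0..1} (\<lambda>\<tau>. f \<tau> * integral\<^sup>L M (\<lambda>\<omega>. Z \<tau> \<omega> * W \<omega>)) \<and>
      integral\<^sup>L M (\<lambda>\<omega>. Y \<omega> * W \<omega>) =
        (LINT \<tau>:{0..1}|lborel. f \<tau> * integral\<^sup>L M (\<lambda>\<omega>. Z \<tau> \<omega> * W \<omega>))"
    using Y unfolding ms_integral01_def by auto
  show "set_integrable lborel {0..1} (\<lambda>s. f s * integral\<^sup>L M (\<lambda>\<omega>. Z s \<omega> * Z \<tau> \<omega>))"
    if "\<tau> \<in> {0..1}" for \<tau>
    using YW[OF meas[OF that] sq[OF that]] by simp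
  have ZY: "f \<tau> * integral\<^sup>L M (\<lambda>\<omega>. Z \<tau> \<omega> * Y \<omega>) =
      f \<tau> * (LINT s:{0..1}|lborel. f s * integral\<^sup>L M (\<lambda>\<omega>. Z s \<omega> * Z \<tau> \<omega>))"
    if "\<tau> \<in> {0..1}" for \<tau>
    using YW[OF meas[OF that] sq[OF that]] by (simp add: mult.commute)
  have outer: "set_integrable lborel {0..1} (\<lambda>\<tau>. f \<tau> * integral\<^sup>L M (\<lambda>\<omega>. Z \<tau> \<omega> * Y \<omega>))"
    and YY: "integral\<^sup>L M (\<lambda>\<omega>. Y \<omega> * Y \<omega>) =
      (LINT \<tau>:{0..1}|lborel. f \<tau> * integral\<^sup>L M (\<lambda>\<omega>. Z \<tau> \<omega> * Y \<omega>))"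
    using YW[OF Y_meas Y_sq] by auto
  show "set_integrable lborel {0..1}
      (\<lambda>\<tau>. f \<tau> * (LINT s:{0..1}|lborel. f s * integral\<^sup>L M (\<lambda>\<omega>. Z s \<omega> * Z \<tau> \<omega>)))"
    using outer by (subst set_integrable_cong[OF refl refl ZY[symmetric]]) auto
  have "(LINT \<tau>:{0..1}|lborel. f \<tau> * integral\<^sup>L M (\<lambda>\<omega>. Z \<tau> \<omega> * Y \<omega>)) =
      (LINT \<tau>:{0..1}|lborel. f \<tau> * (LINT s:{0..1}|lborel. f s * integral\<^sup>L M (\<lambda>\<omega>. Z s \<omega> * Z \<tau> \<omega>)))"
    by (rule set_lebesgue_integral_cong) (use ZY in auto)
  with YY show "integral\<^sup>L M (\<lambda>\<omega>. (Y \<omega>)\<^sup>2) =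
      (LINT \<tau>:{0..1}|lborel. f \<tau> * (LINT s:{0..1}|lborel. f s * integral\<^sup>L M (\<lambda>\<omega>. Z s \<omega> * Z \<tau> \<omega>)))"
    by (simp add: power2_eq_square)
qed

lemma (in prob_space) ms_integral01_variance:
  assumes Y: "ms_integral01 M f Z Y"
    and meas: "\<And>\<tau>. \<tau> \<in> {0..1} \<Longrightarrow> Z \<tau> \<in> borel_measurable M"
    and sq: "\<And>\<tau>. \<tau> \<in> {0..1} \<Longrightarrow> integrable M (\<lambda>\<omega>. (Z \<tau> \<omega>)\<^sup>2)"
    and mean: "\<And>\<tau>. \<tau> \<in> {0..1} \<Longrightarrow> expectation (Z \<tau>) = m \<tau>"
    and cov: "\<And>s \<tau>. s \<in> {0..1} \<Longrightarrow> \<tau> \<in> {0..1} \<Longrightarrow>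
      expectation (\<lambda>\<omega>. (Z s \<omega> - m s) * (Z \<tau> \<omega> - m \<tau>)) = c s \<tau>"
  shows "\<And>\<tau>. \<tau> \<in> {0..1} \<Longrightarrow> set_integrable lborel {0..1} (\<lambda>s. f s * c s \<tau>)"
    and "set_integrable lborel {0..1} (\<lambda>\<tau>. f \<tau> * (LINT s:{0..1}|lborel. f s * c s \<tau>))"
    and "rv_variance M Y = (LINT \<tau>:{0..1}|lborel. f \<tau> * (LINT s:{0..1}|lborel. f s * c s \<tau>))"
proof -
  have centered_meas: "(\<lambda>\<omega>. Z \<tau> \<omega> - m \<tau>) \<in> borel_measurable M"
    and centered_sq: "integrable M (\<lambda>\<omega>. (Z \<tau> \<omega> - m \<tau>)\<^sup>2)" if "\<tau> \<in> {0..1}" for \<tau>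
    using meas[OF that] sq[OF that] by (auto intro: square_integrable_diff_const)
  note moment = ms_integral01_second_moment[OF ms_integral01_centered[OF Y meas sq mean]]
  have inner_eq: "f s * c s \<tau> = f s * expectation (\<lambda>\<omega>. (Z s \<omega> - m s) * (Z \<tau> \<omega> - m \<tau>))"
    if "s \<in> {0..1}" "\<tau> \<in> {0..1}" for s \<tau>
    using cov[OF that] by simp
  have inner_int: "(LINT s:{0..1}|lborel. f s * c s \<tau>) =
      (LINT s:{0..1}|lborel. f s * expectation (\<lambda>\<omega>. (Z s \<omega> - m s) * (Z \<tau> \<omega> - m \<tau>)))"
    if "\<tau> \<in> {0..1}" for \<tau>
    by (rule set_lebesgue_integral_cong) (use inner_eq that in auto)
  show "set_integrable lborel {0..1} (\<lambda>s. f s * c s \<tau>)" if "\<tau> \<in> {0..1}" for \<tau>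
  proof (subst set_integrable_cong[OF refl refl inner_eq[OF _ that]])
    show "set_integrable lborel {0..1}
        (\<lambda>s. f s * expectation (\<lambda>\<omega>. (Z s \<omega> - m s) * (Z \<tau> \<omega> - m \<tau>)))"
      by (rule moment(1)) (use centered_meas centered_sq that in auto)
  qed
  show "set_integrable lborel {0..1} (\<lambda>\<tau>. f \<tau> * (LINT s:{0..1}|lborel. f s * c s \<tau>))"
  proof (subst set_integrable_cong[OF refl refl])
    show "set_integrable lborel {0..1} (\<lambda>\<tau>. f \<tau> *
        (LINT s:{0..1}|lborel. f s * expectation (\<lambda>\<omega>. (Z s \<omega> - m s) * (Z \<tau> \<omega> - m \<tau>))))"
      by (rule moment(2)) (use centered_meas centered_sq in auto)
  qed (auto simp: inner_int)
  have "rv_variance M Y = expectation (\<lambda>\<omega>. (Y \<omega> - expectation Y)\<^sup>2)"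
    unfolding rv_variance_def ..
  also have "\<dots> = (LINT \<tau>:{0..1}|lborel. f \<tau> *
      (LINT s:{0..1}|lborel. f s * expectation (\<lambda>\<omega>. (Z s \<omega> - m s) * (Z \<tau> \<omega> - m \<tau>))))"
    by (rule moment(3)) (use centered_meas centered_sq in auto)
  also have "\<dots> = (LINT \<tau>:{0..1}|lborel. f \<tau> * (LINT s:{0..1}|lborel. f s * c s \<tau>))"
    by (rule set_lebesgue_integral_cong) (auto simp: inner_int)
  finally show "rv_variance M Y = (LINT \<tau>:{0..1}|lborel. f \<tau> * (LINT s:{0..1}|lborel. f s * c s \<tau>))" .
qed

lemma has_integral_real_derivative_interior:
  fixes F F' :: "real \<Rightarrow> real"
  assumes "u \<le> v" "continuous_on {u..v} F"
    and "\<And>x. x \<in> {u<..<v} \<Longrightarrow> (F has_real_derivative F' x) (at x)"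
  shows "(F' has_integral (F v - F u)) {u..v}"
  using assms by (intro fundamental_theorem_of_calculus_interior)
    (auto simp: has_real_derivative_iff_has_vector_derivative)

locale kernel_primitive =
  fixes g f :: "real \<Rightarrow> real" and h :: real
  assumes h_nonzero: "h \<noteq> 0"
    and continuous: "continuous_on {0..1} g"
    and vanishes_0: "g 0 = 0" and vanishes_1: "g 1 = 0"
    and derivative: "\<And>x. x \<in> {0<..<1} \<Longrightarrow> (g has_real_derivative - h * f x) (at x)"
begin

definition G :: "real \<Rightarrow> real" where
  "G \<tau> = integral {0..\<tau>} g"

lemma has_integral_scaled_iff:
  "((\<lambda>x. - h * F x) has_integral I) S \<longleftrightarrow> (F has_integral - I / h) S"
  using has_integral_mult_right_iff[of "- h" F I S] h_nonzero by simp

lemma has_integral_kernel_interval: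
  assumes "0 \<le> u" "u \<le> v" "v \<le> 1"
  shows "(f has_integral (g u - g v) / h) {u..v}"
proof -
  have "((\<lambda>x. - h * f x) has_integral g v - g u) {u..v}"
    using assms by (intro has_integral_real_derivative_interior continuous_on_subset[OF continuous]
      derivative) auto
  then show ?thesis
    unfolding has_integral_scaled_iff by (rule has_integral_eq_rhs) (simp add: field_simps h_nonzero)
qed

lemma has_integral_id_mult_kernel_interval:
  assumes "0 \<le> u" "u \<le> v" "v \<le> 1"
  shows "((\<lambda>s. s * f s) has_integral (u * g u - v * g v + integral {u..v} g) / h) {u..v}"
proof -
  have cont: "continuous_on {u..v} g"
    using assms by (intro continuous_on_subset[OF continuous]) auto
  have "((\<lambda>s. g s + s * (- h * f s)) has_integral v * g v - u * g u) {u..v}"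
  proof (rule has_integral_real_derivative_interior[where F = "\<lambda>s. s * g s"])
    show "continuous_on {u..v} (\<lambda>s. s * g s)"
      using cont by (intro continuous_intros)
    fix x assume "x \<in> {u<..<v}"
    with assms have "x \<in> {0<..<1}"
      by auto
    from derivative[OF this] show "((\<lambda>s. s * g s) has_real_derivative g x + x * (- h * f x)) (at x)"
      by (auto intro!: derivative_eq_intros)
  qed (use assms in auto)
  moreover have "(g has_integral integral {u..v} g) {u..v}"
    using cont by (intro integrable_integral integrable_continuous_real)
  ultimately have "((\<lambda>s. (g s + s * (- h * f s)) - g s) has_integral
      v * g v - u * g u - integral {u..v} g) {u..v}"
    by (rule has_integral_diff)
  then have "((\<lambda>s. - h * (s * f s)) has_integral v * g v - u * g u - integral {u..v} g) {u..v}"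
    by (simp add: algebra_simps)
  then show ?thesis
    unfolding has_integral_scaled_iff by (rule has_integral_eq_rhs) (simp add: field_simps h_nonzero)
qed

lemma has_integral_kernel: "(f has_integral 0) {0..1}"
  using has_integral_kernel_interval[of 0 1] by (simp add: vanishes_0 vanishes_1)

lemma has_integral_kernel_mult_min:
  assumes "\<tau> \<in> {0..1}"
  shows "((\<lambda>s. f s * min s \<tau>) has_integral G \<tau> / h) {0..1}"
proof -
  have left: "((\<lambda>s. f s * min s \<tau>) has_integral (- \<tau> * g \<tau> + G \<tau>) / h) {0..\<tau>}"
    using has_integral_id_mult_kernel_interval[of 0 \<tau>] assms
    by (subst has_integral_cong[where g = "\<lambda>s. s * f s"]) (auto simp: min_def G_def vanishes_0)
  have right: "((\<lambda>s. f s * min s \<tau>) has_integral g \<tau> * \<tau> / h) {\<tau>..1}"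
    using has_integral_mult_left[OF has_integral_kernel_interval[of \<tau> 1], of \<tau>] assms
    by (subst has_integral_cong[where g = "\<lambda>s. f s * \<tau>"]) (auto simp: min_def vanishes_1)
  have "((\<lambda>s. f s * min s \<tau>) has_integral (- \<tau> * g \<tau> + G \<tau>) / h + g \<tau> * \<tau> / h) {0..1}"
    using assms by (intro has_integral_combine[OF _ _ left right]) auto
  then show ?thesis
    by (rule has_integral_eq_rhs) (simp add: field_simps h_nonzero)
qed

lemma has_integral_id_mult_kernel: "((\<lambda>s. s * f s) has_integral G 1 / h) {0..1}"
  using has_integral_id_mult_kernel_interval[of 0 1] by (simp add: G_def vanishes_0 vanishes_1)

lemma has_integral_kernel_mult_max:
  assumes "\<tau> \<in> {0..1}"
  shows "((\<lambda>s. f s * max s \<tau>) has_integral (G 1 - G \<tau>) / h) {0..1}"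
proof -
  have "((\<lambda>s. s * f s + \<tau> * f s - f s * min s \<tau>) has_integral G 1 / h + \<tau> * 0 - G \<tau> / h) {0..1}"
    by (intro has_integral_diff has_integral_add has_integral_mult_right has_integral_id_mult_kernel
      has_integral_kernel has_integral_kernel_mult_min assms)
  moreover have "s * f s + \<tau> * f s - f s * min s \<tau> = f s * max s \<tau>" for s
    by (simp add: min_def max_def algebra_simps)
  ultimately show ?thesis
    by (simp add: diff_divide_distrib)
qed

lemma has_integral_kernel_mult_G:
  "((\<lambda>\<tau>. f \<tau> * G \<tau>) has_integral integral {0..1} (\<lambda>x. (g x)\<^sup>2) / h) {0..1}"
proof -
  have G_deriv: "(G has_real_derivative g x) (at x within {0..1})" if "x \<in> {0..1}" for x
    unfolding G_def[abs_def] using integral_has_real_derivative[OF continuous that] .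
  then have G_cont: "continuous_on {0..1} G"
    by (rule DERIV_continuous_on)
  have "((\<lambda>x. - h * f x * G x + g x * g x) has_integral g 1 * G 1 - g 0 * G 0) {0..1}"
  proof (rule has_integral_real_derivative_interior[where F = "\<lambda>x. g x * G x"])
    show "continuous_on {0..1} (\<lambda>x. g x * G x)"
      using continuous G_cont by (intro continuous_intros)
    fix x :: real assume x: "x \<in> {0<..<1}"
    then have "(G has_real_derivative g x) (at x)"
      using G_deriv[of x] at_within_interior[of x "{0..1}"] by auto
    with derivative[OF x] show "((\<lambda>x. g x * G x) has_real_derivative - h * f x * G x + g x * g x) (at x)"
      by (auto intro!: derivative_eq_intros)
  qed auto
  moreover have "((\<lambda>x. (g x)\<^sup>2) has_integral integral {0..1} (\<lambda>x. (g x)\<^sup>2)) {0..1}"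
    using continuous by (intro integrable_integral integrable_continuous_real continuous_intros)
  ultimately have "((\<lambda>x. (- h * f x * G x + g x * g x) - (g x)\<^sup>2) has_integral
      0 - integral {0..1} (\<lambda>x. (g x)\<^sup>2)) {0..1}"
    using vanishes_0 vanishes_1 by (intro has_integral_diff) auto
  then have "((\<lambda>x. - h * (f x * G x)) has_integral - integral {0..1} (\<lambda>x. (g x)\<^sup>2)) {0..1}"
    by (simp add: power2_eq_square algebra_simps)
  then show ?thesis
    unfolding has_integral_scaled_iff by simp
qed

definition covariance_potential :: "real \<Rightarrow> real" where
  "covariance_potential \<tau> = (if 0 < h then G \<tau> else G 1 - G \<tau>)"

lemma has_integral_kernel_mult_min_affine:
  assumes "\<tau> \<in> {0..1}"
  shows "((\<lambda>s. f s * min (t0 + h * s) (t0 + h * \<tau>)) has_integral covariance_potential \<tau>) {0..1}"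
proof (cases "0 < h")
  case True
  have affine: "min (t0 + h * s) (t0 + h * \<tau>) = t0 + h * min s \<tau>" for s
    using True by (simp add: min_def)
  have "f s * min (t0 + h * s) (t0 + h * \<tau>) = t0 * f s + h * (f s * min s \<tau>)" for s
    unfolding affine by (simp add: algebra_simps)
  moreover have "((\<lambda>s. t0 * f s + h * (f s * min s \<tau>)) has_integral t0 * 0 + h * (G \<tau> / h)) {0..1}"
    by (intro has_integral_add has_integral_mult_right has_integral_kernel
      has_integral_kernel_mult_min assms)
  ultimately show ?thesis
    using True by (simp add: covariance_potential_def)
next
  case False
  then have neg: "h < 0"
    using h_nonzero by simp
  have affine: "min (t0 + h * s) (t0 + h * \<tau>) = t0 + h * max s \<tau>" for s
    using neg by (simp add: min_def max_def)
  have "f s * min (t0 + h * s) (t0 + h * \<tau>) = t0 * f s + h * (f s * max s \<tau>)" for s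
    unfolding affine by (simp add: algebra_simps)
  moreover have "((\<lambda>s. t0 * f s + h * (f s * max s \<tau>)) has_integral
      t0 * 0 + h * ((G 1 - G \<tau>) / h)) {0..1}"
    by (intro has_integral_add has_integral_mult_right has_integral_kernel
      has_integral_kernel_mult_max assms)
  ultimately show ?thesis
    using neg by (simp add: covariance_potential_def)
qed

lemma has_integral_kernel_mult_covariance_potential:
  "((\<lambda>\<tau>. f \<tau> * covariance_potential \<tau>) has_integral integral {0..1} (\<lambda>x. (g x)\<^sup>2) / \<bar>h\<bar>) {0..1}"
proof (cases "0 < h")
  case True
  then show ?thesis
    using has_integral_kernel_mult_G by (simp add: covariance_potential_def)
next
  case False
  then have neg: "h < 0"
    using h_nonzero by simp
  have "((\<lambda>\<tau>. G 1 * f \<tau> - f \<tau> * G \<tau>) has_integral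
      G 1 * 0 - integral {0..1} (\<lambda>x. (g x)\<^sup>2) / h) {0..1}"
    by (intro has_integral_diff has_integral_mult_right has_integral_kernel has_integral_kernel_mult_G)
  then show ?thesis
    using neg by (simp add: covariance_potential_def algebra_simps)
qed

end

lemma (in prob_space) variance_ms_integral01_min_covariance:
  assumes X: "second_order_process M X m (\<lambda>t s. \<eta> * min t s)"
    and nonneg: "\<And>\<tau>. \<tau> \<in> {0..1} \<Longrightarrow> 0 \<le> t0 + h * \<tau>"
    and g: "kernel_primitive g f h"
    and Y: "ms_integral01 M f (\<lambda>\<tau>. X (t0 + h * \<tau>)) Y"
  shows "rv_variance M Y = \<eta> / \<bar>h\<bar> * integral {0..1} (\<lambda>x. (g x)\<^sup>2)"
proof -
  interpret kernel_primitive g f h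
    by (rule g)
  define c where "c s \<tau> = \<eta> * min (t0 + h * s) (t0 + h * \<tau>)" for s \<tau>
  note variance = ms_integral01_variance[OF Y, where m = "\<lambda>\<tau>. m (t0 + h * \<tau>)" and c = c]
  have moments: "X (t0 + h * \<tau>) \<in> borel_measurable M"
    "integrable M (\<lambda>\<omega>. (X (t0 + h * \<tau>) \<omega>)\<^sup>2)"
    "expectation (X (t0 + h * \<tau>)) = m (t0 + h * \<tau>)" if "\<tau> \<in> {0..1}" for \<tau>
    using X nonneg[OF that] unfolding second_order_process_def by auto
  have cov: "expectation (\<lambda>\<omega>. (X (t0 + h * s) \<omega> - m (t0 + h * s)) *
      (X (t0 + h * \<tau>) \<omega> - m (t0 + h * \<tau>))) = c s \<tau>" if "s \<in> {0..1}" "\<tau> \<in> {0..1}" for s \<tau>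
    using X nonneg[OF that(1)] nonneg[OF that(2)] unfolding second_order_process_def c_def by auto
  have inner: "(LINT s:{0..1}|lborel. f s * c s \<tau>) = \<eta> * covariance_potential \<tau>"
    if "\<tau> \<in> {0..1}" for \<tau>
  proof -
    have "(LINT s:{0..1}|lborel. f s * c s \<tau>) = integral {0..1} (\<lambda>s. f s * c s \<tau>)"
      by (rule set_borel_integral_eq_integral(2), rule variance(1)) (use moments cov that in auto)
    also have "\<dots> = \<eta> * covariance_potential \<tau>"
      using has_integral_mult_right[OF has_integral_kernel_mult_min_affine[OF that], of \<eta>]
      by (intro integral_unique) (simp add: c_def algebra_simps)
    finally show ?thesis .
  qed
  have outer: "set_integrable lborel {0..1} (\<lambda>\<tau>. f \<tau> * (\<eta> * covariance_potential \<tau>))"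
  proof (subst set_integrable_cong[OF refl refl])
    show "set_integrable lborel {0..1} (\<lambda>\<tau>. f \<tau> * (LINT s:{0..1}|lborel. f s * c s \<tau>))"
      by (rule variance(2)) (use moments cov in auto)
  qed (auto simp: inner)
  have "rv_variance M Y = (LINT \<tau>:{0..1}|lborel. f \<tau> * (LINT s:{0..1}|lborel. f s * c s \<tau>))"
    by (rule variance(3)) (use moments cov in auto)
  also have "\<dots> = (LINT \<tau>:{0..1}|lborel. f \<tau> * (\<eta> * covariance_potential \<tau>))"
    by (rule set_lebesgue_integral_cong) (auto simp: inner)
  also have "\<dots> = integral {0..1} (\<lambda>\<tau>. f \<tau> * (\<eta> * covariance_potential \<tau>))"
    using outer by (rule set_borel_integral_eq_integral(2))
  also have "\<dots> = \<eta> / \<bar>h\<bar> * integral {0..1} (\<lambda>x. (g x)\<^sup>2)"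
    using has_integral_mult_right[OF has_integral_kernel_mult_covariance_potential, of \<eta>]
    by (intro integral_unique) (simp add: algebra_simps)
  finally show ?thesis .
qed

lemma Beta_real_pos: "0 < a \<Longrightarrow> 0 < b \<Longrightarrow> 0 < Beta a (b::real)"
  by (simp add: Beta_def Gamma_real_pos)

lemma Beta_real_plus1_right:
  assumes "0 < x" "0 < y"
  shows "Beta y (x + 1) = x / (x + y) * Beta x (y::real)"
proof -
  have "x \<notin> \<int>\<^sub>\<le>\<^sub>0"
    using assms by auto
  from Beta_plus1_left[OF this, of y] assms show ?thesis
    by (simp add: Beta_commute field_simps)
qed

definition jacobi_primitive :: "real \<Rightarrow> real \<Rightarrow> real \<Rightarrow> real" where
  "jacobi_primitive a b x = (1 - x) powr (a + 1) * x powr (b + 1) / Beta (b + 2) (a + 2)"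

lemma kernel_primitive_jacobi:
  assumes "a > -1" "b > -1" "h \<noteq> 0"
  shows "kernel_primitive (jacobi_primitive a b) (jacobi_kernel a b h) h"
proof
  show "h \<noteq> 0"
    by (fact assms(3))
  show "continuous_on {0..1} (jacobi_primitive a b)"
    unfolding jacobi_primitive_def[abs_def] using assms Beta_real_pos[of "b + 2" "a + 2"]
    by (intro continuous_intros continuous_on_powr') auto
  show "jacobi_primitive a b 0 = 0" "jacobi_primitive a b 1 = 0"
    using assms by (simp_all add: jacobi_primitive_def)
  fix x :: real assume "x \<in> {0<..<1}"
  then have x: "0 < x" "x < 1"
    by auto
  define B where "B = Beta (b + 2) (a + 2)"
  have "B > 0"
    unfolding B_def using assms by (intro Beta_real_pos) auto
  have normalisation: "Gamma (a + b + 4) / (Gamma (b + 2) * Gamma (a + 2)) = 1 / B"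
    by (simp add: B_def Beta_def add_ac)
  have kernel: "- h * jacobi_kernel a b h x =
      ((b + 1) - (a + b + 2) * x) * (1 - x) powr a * x powr b / B"
    unfolding jacobi_kernel_def normalisation using assms(3) \<open>B > 0\<close> by (simp add: field_simps)
  have deriv: "((\<lambda>x. (1 - x) powr (a + 1) * x powr (b + 1) / B) has_real_derivative
      ((a + 1) * (1 - x) powr a * - 1 * x powr (b + 1)
        + (1 - x) powr (a + 1) * ((b + 1) * x powr b)) / B) (at x)"
    using x \<open>B > 0\<close> by (auto intro!: derivative_eq_intros DERIV_chain2[OF has_real_derivative_powr])
  have powers: "(1 - x) powr (a + 1) = (1 - x) powr a * (1 - x)" "x powr (b + 1) = x powr b * x"
    using x by (simp_all add: powr_add)
  show "(jacobi_primitive a b has_real_derivative - h * jacobi_kernel a b h x) (at x)"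
    unfolding kernel jacobi_primitive_def[abs_def] B_def[symmetric]
    by (rule DERIV_cong[OF deriv]) (unfold powers, simp add: algebra_simps)
qed

lemma kernel_primitive_lincomb:
  assumes "kernel_primitive g1 f1 h" "kernel_primitive g0 f0 h"
  shows "kernel_primitive (\<lambda>x. c1 * g1 x + c0 * g0 x) (\<lambda>x. c1 * f1 x + c0 * f0 x) h"
proof -
  interpret g1: kernel_primitive g1 f1 h by fact
  interpret g0: kernel_primitive g0 f0 h by fact
  show ?thesis
  proof
    show "continuous_on {0..1} (\<lambda>x. c1 * g1 x + c0 * g0 x)"
      using g1.continuous g0.continuous by (intro continuous_intros)
    fix x :: real assume "x \<in> {0<..<1}"
    from g1.derivative[OF this] g0.derivative[OF this]
    show "((\<lambda>x. c1 * g1 x + c0 * g0 x) has_real_derivative - h * (c1 * f1 x + c0 * f0 x)) (at x)"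
      by (auto intro!: derivative_eq_intros simp: algebra_simps)
  qed (simp_all add: g1.h_nonzero g1.vanishes_0 g1.vanishes_1 g0.vanishes_0 g0.vanishes_1)
qed

lemma has_integral_jacobi_primitive_mult:
  assumes "a > -1" "b > -1" "a' > -1" "b' > -1"
  shows "((\<lambda>x. jacobi_primitive a b x * jacobi_primitive a' b' x) has_integral
     Beta (b + b' + 3) (a + a' + 3) / (Beta (b + 2) (a + 2) * Beta (b' + 2) (a' + 2))) {0..1}"
proof -
  have "((\<lambda>x. x powr ((b + b' + 3) - 1) * (1 - x) powr ((a + a' + 3) - 1)) has_integral
      Beta (b + b' + 3) (a + a' + 3)) {0..1}"
    using assms by (intro has_integral_Beta_real) auto
  then have "((\<lambda>x. x powr ((b + b' + 3) - 1) * (1 - x) powr ((a + a' + 3) - 1)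
      / (Beta (b + 2) (a + 2) * Beta (b' + 2) (a' + 2))) has_integral
      Beta (b + b' + 3) (a + a' + 3) / (Beta (b + 2) (a + 2) * Beta (b' + 2) (a' + 2))) {0..1}"
    by (rule has_integral_divide)
  moreover have "x powr ((b + b' + 3) - 1) * (1 - x) powr ((a + a' + 3) - 1)
      / (Beta (b + 2) (a + 2) * Beta (b' + 2) (a' + 2))
      = jacobi_primitive a b x * jacobi_primitive a' b' x" for x :: real
  proof -
    have "x powr ((b + b' + 3) - 1) = x powr (b + 1) * x powr (b' + 1)"
      "(1 - x) powr ((a + a' + 3) - 1) = (1 - x) powr (a + 1) * (1 - x) powr (a' + 1)"
      by (subst powr_add[symmetric], simp add: algebra_simps)+
    then show ?thesis
      unfolding jacobi_primitive_def by simp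
  qed
  ultimately show ?thesis
    by simp
qed

lemma has_integral_jacobi_primitive_square:
  assumes "a > -1" "b > -1"
  shows "((\<lambda>x. (jacobi_primitive a b x)\<^sup>2) has_integral
      2 * ((a + 1) / (2 * a + 2 * b + 5)) * (Beta (2 * a + 2) (2 * b + 3) / (Beta (b + 2) (a + 2))\<^sup>2))
    {0..1}"
proof -
  have "Beta (b + b + 3) (a + a + 3) = (2 * a + 2) / (2 * a + 2 * b + 5) * Beta (2 * a + 2) (2 * b + 3)"
    using Beta_real_plus1_right[of "2 * a + 2" "2 * b + 3"] assms by (simp add: algebra_simps)
  with has_integral_jacobi_primitive_mult[OF assms assms] show ?thesis
    by (simp add: power2_eq_square algebra_simps)
qed

lemma has_integral_jacobi_affine_primitive_square:
  assumes "\<mu> > -1" "\<kappa> > -1"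
  shows "((\<lambda>x. (c1 * jacobi_primitive (\<mu> + 1) \<kappa> x + c0 * jacobi_primitive \<mu> (\<kappa> + 1) x)\<^sup>2)
    has_integral
      c1\<^sup>2 * (2 * ((\<mu> + 2) / (2 * \<mu> + 2 * \<kappa> + 7))
        * (Beta (2 * \<mu> + 4) (2 * \<kappa> + 3) / (Beta (\<kappa> + 2) (\<mu> + 3))\<^sup>2))
    + c0\<^sup>2 * (2 * ((\<mu> + 1) / (2 * \<mu> + 2 * \<kappa> + 7))
        * (Beta (2 * \<mu> + 2) (2 * \<kappa> + 5) / (Beta (\<kappa> + 3) (\<mu> + 2))\<^sup>2))
    + 2 * c0 * c1 * (Beta (2 * \<mu> + 4) (2 * \<kappa> + 4) / (Beta (\<kappa> + 2) (\<mu> + 3) * Beta (\<kappa> + 3) (\<mu> + 2))))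
    {0..1}"
proof -
  have square1: "((\<lambda>x. (jacobi_primitive (\<mu> + 1) \<kappa> x)\<^sup>2) has_integral 2 * ((\<mu> + 2) / (2 * \<mu> + 2 * \<kappa> + 7))
      * (Beta (2 * \<mu> + 4) (2 * \<kappa> + 3) / (Beta (\<kappa> + 2) (\<mu> + 3))\<^sup>2)) {0..1}"
    using has_integral_jacobi_primitive_square[of "\<mu> + 1" \<kappa>] assms by (simp add: algebra_simps)
  have square0: "((\<lambda>x. (jacobi_primitive \<mu> (\<kappa> + 1) x)\<^sup>2) has_integral 2 * ((\<mu> + 1) / (2 * \<mu> + 2 * \<kappa> + 7))
      * (Beta (2 * \<mu> + 2) (2 * \<kappa> + 5) / (Beta (\<kappa> + 3) (\<mu> + 2))\<^sup>2)) {0..1}"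
    using has_integral_jacobi_primitive_square[of \<mu> "\<kappa> + 1"] assms by (simp add: algebra_simps)
  have cross: "((\<lambda>x. jacobi_primitive (\<mu> + 1) \<kappa> x * jacobi_primitive \<mu> (\<kappa> + 1) x) has_integral
      Beta (2 * \<mu> + 4) (2 * \<kappa> + 4) / (Beta (\<kappa> + 2) (\<mu> + 3) * Beta (\<kappa> + 3) (\<mu> + 2))) {0..1}"
  proof -
    have "Beta (\<kappa> + (\<kappa> + 1) + 3) (\<mu> + 1 + \<mu> + 3) = Beta (2 * \<mu> + 4) (2 * \<kappa> + 4)"
      by (subst Beta_commute) (simp add: algebra_simps)
    with has_integral_jacobi_primitive_mult[of "\<mu> + 1" \<kappa> \<mu> "\<kappa> + 1"] assms show ?thesis
      by (simp add: algebra_simps)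
  qed
  have "(c1 * p1 + c0 * p0)\<^sup>2 = c1\<^sup>2 * p1\<^sup>2 + c0\<^sup>2 * p0\<^sup>2 + 2 * c0 * c1 * (p1 * p0)" for p1 p0 :: real
    by (simp add: power2_eq_square algebra_simps)
  with has_integral_add[OF has_integral_add[OF has_integral_mult_right[OF square1, of "c1\<^sup>2"]
      has_integral_mult_right[OF square0, of "c0\<^sup>2"]] has_integral_mult_right[OF cross, of "2 * c0 * c1"]]
  show ?thesis
    by simp
qed

lemma second_order_process_of_noise:
  assumes "(\<exists>\<sigma>2. wiener_process_param M X \<sigma>2 \<and> \<eta> = \<sigma>2)
           \<or> (\<exists>\<nu>. poisson_process_intensity M X \<nu> \<and> \<eta> = \<nu>)"
  obtains m where "second_order_process M X m (\<lambda>t s. \<eta> * min t s)"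
  using assms unfolding wiener_process_param_def poisson_process_intensity_def by blast

lemma affine_nonneg_on_unit_interval:
  fixes a d \<tau> :: real
  assumes "0 \<le> a" "0 \<le> a + d" "\<tau> \<in> {0..1}"
  shows "0 \<le> a + d * \<tau>"
proof -
  have "0 \<le> (1 - \<tau>) * a + \<tau> * (a + d)"
    using assms by simp
  then show ?thesis
    by (simp add: algebra_simps)
qed

theorem proposition5:
  fixes M :: "'a measure" and X :: "real \<Rightarrow> 'a \<Rightarrow> real"
    and I :: "real set" and \<beta> t0 T \<kappa> \<mu> \<xi> \<eta> :: real
    and Y1 Y2 :: "'a \<Rightarrow> real"
  assumes "prob_space M"
    and "open I" and "is_interval I" and "I \<noteq> {}" and "I \<subseteq> {0..}"
    and "\<beta> \<in> {-1, 1}" and "t0 \<in> I" and "T > 0" and "t0 + \<beta> * T \<in> I"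
    and "\<kappa> > -1" and "\<mu> > -1" and "\<xi> \<in> {0..1}"
    and noise: "(\<exists>\<sigma>2. wiener_process_param M X \<sigma>2 \<and> \<eta> = \<sigma>2)
               \<or> (\<exists>\<nu>. poisson_process_intensity M X \<nu> \<and> \<eta> = \<nu>)"
    and Y1: "ms_integral01 M (jacobi_kernel \<mu> \<kappa> (\<beta> * T))
               (\<lambda>\<tau>. X (t0 + \<beta> * T * \<tau>)) Y1"
    and Y2: "ms_integral01 M (jacobi_kernel_affine2 \<mu> \<kappa> \<xi> (\<beta> * T))
               (\<lambda>\<tau>. X (t0 + \<beta> * T * \<tau>)) Y2"
  shows "rv_variance M Y1 =
           (2 * \<eta> / T) * ((\<mu> + 1) / (2 * \<mu> + 2 * \<kappa> + 5))
           * (Beta (2 * \<mu> + 2) (2 * \<kappa> + 3) / (Beta (\<kappa> + 2) (\<mu> + 2))\<^sup>2)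
       \<and> rv_variance M Y2 =
           (jacobi_lambda1 \<mu> \<kappa> \<xi>)\<^sup>2 * (2 * \<eta> / T) * ((\<mu> + 2) / (2 * \<mu> + 2 * \<kappa> + 7))
             * (Beta (2 * \<mu> + 4) (2 * \<kappa> + 3) / (Beta (\<kappa> + 2) (\<mu> + 3))\<^sup>2)
         + (jacobi_lambda0 \<mu> \<kappa> \<xi>)\<^sup>2 * (2 * \<eta> / T) * ((\<mu> + 1) / (2 * \<mu> + 2 * \<kappa> + 7))
             * (Beta (2 * \<mu> + 2) (2 * \<kappa> + 5) / (Beta (\<kappa> + 3) (\<mu> + 2))\<^sup>2)
         + jacobi_lambda0 \<mu> \<kappa> \<xi> * jacobi_lambda1 \<mu> \<kappa> \<xi> * (2 * \<eta> / T)
             * (Beta (2 * \<mu> + 4) (2 * \<kappa> + 4) / (Beta (\<kappa> + 2) (\<mu> + 3) * Beta (\<kappa> + 3) (\<mu> + 2)))"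
proof -
  interpret prob_space M by fact
  obtain m where X: "second_order_process M X m (\<lambda>t s. \<eta> * min t s)"
    using noise by (rule second_order_process_of_noise)
  define h where "h = \<beta> * T"
  define l1 l0 where "l1 = jacobi_lambda1 \<mu> \<kappa> \<xi>" and "l0 = jacobi_lambda0 \<mu> \<kappa> \<xi>"
  have h: "h \<noteq> 0" "\<bar>h\<bar> = T"
    using assms by (auto simp: h_def abs_mult)
  have nonneg: "0 \<le> t0 + h * \<tau>" if "\<tau> \<in> {0..1}" for \<tau>
    using affine_nonneg_on_unit_interval[OF _ _ that] \<open>I \<subseteq> {0..}\<close> \<open>t0 \<in> I\<close> \<open>t0 + \<beta> * T \<in> I\<close>
    unfolding h_def by auto
  have affine: "jacobi_kernel_affine2 \<mu> \<kappa> \<xi> h =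
      (\<lambda>x. l1 * jacobi_kernel (\<mu> + 1) \<kappa> h x + l0 * jacobi_kernel \<mu> (\<kappa> + 1) h x)"
    by (simp add: jacobi_kernel_affine2_def l1_def l0_def fun_eq_iff)
  have "rv_variance M Y1 = \<eta> / T * integral {0..1} (\<lambda>x. (jacobi_primitive \<mu> \<kappa> x)\<^sup>2)"
    using variance_ms_integral01_min_covariance[OF X nonneg kernel_primitive_jacobi Y1[folded h_def]]
      assms h by simp
  moreover have "rv_variance M Y2 = \<eta> / T * integral {0..1}
      (\<lambda>x. (l1 * jacobi_primitive (\<mu> + 1) \<kappa> x + l0 * jacobi_primitive \<mu> (\<kappa> + 1) x)\<^sup>2)"
    using variance_ms_integral01_min_covariance[OF X nonneg
        kernel_primitive_lincomb[OF kernel_primitive_jacobi kernel_primitive_jacobi]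
        Y2[folded h_def, unfolded affine]] assms h by simp
  ultimately show ?thesis
    using integral_unique[OF has_integral_jacobi_primitive_square[of \<mu> \<kappa>]]
      integral_unique[OF has_integral_jacobi_affine_primitive_square[of \<mu> \<kappa> l1 l0]] assms
    unfolding l1_def l0_def by (simp add: divide_inverse power2_eq_square algebra_simps)
qed

end
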